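(* Let $f$ satisfy $(\mathcal A)$, let $t_0>0$, $\gamma>1$, and let $\tau:[t_0,+\infty[\to\,]0,+\infty[$ be twice continuously differentiable with $\dot\tau(t)>0$ for all $t$ and $\lim_{t\to+\infty}\tau(t)=+\infty$. Let $x:[t_0,+\infty[\to\mathcal H$ be a twice continuously differentiable solution of $$\ddot x(t)+\frac{(1+\gamma)\dot\tau(t)^2-\tau(t)\ddot\tau(t)}{\tau(t)\dot\tau(t)}\dot x(t)+\gamma\frac{\dot\tau(t)^2}{\tau(t)}\nabla f\Big(x(t)+\frac1\gamma\frac{\tau(t)}{\dot\tau(t)}\dot x(t)\Big)=0 .$$ Then $f(x(t))-\inf_{\mathcal H}f=o\big(1/\tau(t)\big)$ as $t\to+\infty$, and $x(t)$ converges weakly as $t\to+\infty$ to an element of $S=\operatorname{argmin} f$.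
   Context: $\mathcal H$ is a real Hilbert space. Assumption $(\mathcal A)$: $f:\mathcal H\to\mathbb R$ is convex and continuously differentiable, $S=\operatorname{argmin}_{\mathcal H} f\neq\emptyset$, and $\nabla f$ is Lipschitz continuous on bounded subsets of $\mathcal H$. *)

theory Defs
  imports "HOL-Analysis.Analysis" "HOL-Library.Landau_Symbols"
begin

definition assumption_A ::
  "('a::{real_inner,complete_space} \<Rightarrow> real) \<Rightarrow> ('a \<Rightarrow> 'a) \<Rightarrow> bool" where
  "assumption_A f g \<longleftrightarrow>
     convex_on UNIV f \<and>
     (\<forall>x. (f has_derivative (\<lambda>h. g x \<bullet> h)) (at x)) \<and>
     continuous_on UNIV g \<and>
     (\<exists>z. \<forall>y. f z \<le> f y) \<and>
     (\<forall>B. bounded B \<longrightarrow> (\<exists>L. \<forall>u\<in>B. \<forall>v\<in>B. norm (g u - g v) \<le> L * norm (u - v)))"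

definition argmin_set :: "('a \<Rightarrow> real) \<Rightarrow> 'a set" where
  "argmin_set f = {z. \<forall>y. f z \<le> f y}"

definition weakly_tendsto_at_top ::
  "(real \<Rightarrow> 'a::real_inner) \<Rightarrow> 'a \<Rightarrow> bool" where
  "weakly_tendsto_at_top x z \<longleftrightarrow> (\<forall>y. ((\<lambda>t. x t \<bullet> y) \<longlongrightarrow> z \<bullet> y) at_top)"

end

theory Submission
  imports Defs "HOL-Library.Diagonal_Subsequence"
begin

text \<open>Put \<open>z = x + (\<tau> / (\<gamma> \<tau>')) x'\<close>. The ODE is equivalent to the pair of first-order
  equations \<open>z' = -\<tau>' \<nabla>f(z)\<close> and \<open>x' = (\<gamma> \<tau>' / \<tau>) (z - x)\<close>. The first is the gradient flow
  reparametrised by \<open>\<tau>\<close>: along it \<open>f \<circ> z\<close> and the distance to every minimiser decrease, which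
  gives \<open>f (z t) - min f = o(1 / \<tau> t)\<close>, and Opial's lemma yields weak convergence of \<open>z\<close> to a
  minimiser. The second says that \<open>x\<close> is an average of \<open>z\<close> with weight \<open>\<tau>\<^sup>\<gamma>\<close>. Such averaging
  preserves limits and decay rates \<open>o(\<tau>\<^sup>-\<^sup>a)\<close> for \<open>a < \<gamma>\<close>; by convexity
  \<open>f (x t) - min f\<close> is dominated by an average of \<open>f (z t) - min f\<close>, and \<open>\<gamma> > 1\<close> gives the rate
  \<open>o(1 / \<tau>)\<close> for \<open>x\<close>.\<close>

lemma DERIV_within_nonpos_imp_nonincreasing:
  fixes h h' :: "real \<Rightarrow> real"
  assumes "T \<le> a" "a \<le> b"
    and deriv: "\<And>u. a \<le> u \<Longrightarrow> u \<le> b \<Longrightarrow> (h has_real_derivative h' u) (at u within {T..})"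
    and nonpos: "\<And>u. a \<le> u \<Longrightarrow> u \<le> b \<Longrightarrow> h' u \<le> 0"
  shows "h b \<le> h a"
proof -
  have "(h has_derivative (\<lambda>d. h' u * d)) (at u within {a..b})" if "a \<le> u" "u \<le> b" for u
    using deriv[of u] that assms(1)
    by (auto simp: has_field_derivative_def intro: has_derivative_subset)
  from mvt_very_simple[OF assms(2) this]
  obtain u where u: "a \<le> u" "u \<le> b" "h b - h a = h' u * (b - a)"
    by auto
  have "h' u * (b - a) \<le> 0"
    using nonpos[OF u(1,2)] assms(2) by (simp add: mult_nonpos_nonneg)
  with u(3) show ?thesis
    by simp
qed

lemma convex_gradient_inequality:
  fixes f :: "'a::real_inner \<Rightarrow> real"
  assumes "convex_on UNIV f" and "(f has_derivative (\<lambda>h. g \<bullet> h)) (at x)"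
  shows "f x + g \<bullet> (y - x) \<le> f y"
proof -
  define \<phi> where "\<phi> s = f (x + s *\<^sub>R (y - x))" for s :: real
  have convex: "convex_on UNIV \<phi>"
  proof (rule convex_onI)
    fix t a b :: real assume "0 < t" "t < 1"
    have "x + ((1 - t) *\<^sub>R a + t *\<^sub>R b) *\<^sub>R (y - x)
        = (1 - t) *\<^sub>R (x + a *\<^sub>R (y - x)) + t *\<^sub>R (x + b *\<^sub>R (y - x))"
      by (simp add: algebra_simps)
    with convex_onD[OF assms(1), of t] \<open>0 < t\<close> \<open>t < 1\<close>
    show "\<phi> ((1 - t) *\<^sub>R a + t *\<^sub>R b) \<le> (1 - t) * \<phi> a + t * \<phi> b"
      unfolding \<phi>_def by simp
  qed simp
  have "(\<phi> has_real_derivative g \<bullet> (y - x)) (at 0)"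
  proof -
    have "((\<lambda>s. x + s *\<^sub>R (y - x)) has_derivative (\<lambda>s. s *\<^sub>R (y - x))) (at 0)"
      by (auto intro!: derivative_eq_intros)
    from has_derivative_compose[OF this, of f "\<lambda>h. g \<bullet> h"] assms(2)
    show ?thesis
      unfolding \<phi>_def has_field_derivative_def by (simp add: o_def mult.commute[of _ "g \<bullet> (y - x)"])
  qed
  from convex_on_imp_above_tangent[OF convex _ _ _ this, of 1]
  have "\<phi> 1 - \<phi> 0 \<ge> g \<bullet> (y - x)"
    by simp
  then show ?thesis
    by (simp add: \<phi>_def)
qed

lemma has_real_derivative_inner:
  assumes "(a has_vector_derivative a') (at t within T)" "(b has_vector_derivative b') (at t within T)"
  shows "((\<lambda>s. a s \<bullet> b s) has_real_derivative (a t \<bullet> b' + a' \<bullet> b t)) (at t within T)"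
  using has_derivative_inner[OF assms[unfolded has_vector_derivative_def]]
  unfolding has_field_derivative_def
  by (rule has_derivative_eq_rhs) (auto simp: algebra_simps)

lemma has_real_derivative_gradient_chain:
  assumes "(f has_derivative (\<lambda>h. G \<bullet> h)) (at (y t))" "(y has_vector_derivative y') (at t within T)"
  shows "((\<lambda>s. f (y s)) has_real_derivative G \<bullet> y') (at t within T)"
proof -
  have "(f has_derivative (\<lambda>h. G \<bullet> h)) (at (y t) within y ` T)"
    using assms(1) by (rule has_derivative_at_withinI)
  from diff_chain_within[OF assms(2)[unfolded has_vector_derivative_def] this]
  show ?thesis
    unfolding has_field_derivative_def o_def
    by (rule has_derivative_eq_rhs) (auto simp: mult.commute)
qed

lemma antimono_bounded_below_tendsto:
  fixes h :: "real \<Rightarrow> real"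
  assumes "\<And>s t. T \<le> s \<Longrightarrow> s \<le> t \<Longrightarrow> h t \<le> h s" and "\<And>t. T \<le> t \<Longrightarrow> B \<le> h t"
  shows "\<exists>l. (h \<longlongrightarrow> l) at_top \<and> (\<forall>t\<ge>T. l \<le> h t)"
proof -
  define l where "l = Inf (h ` {T..})"
  have "bdd_below (h ` {T..})"
    using assms(2) by (auto intro!: bdd_belowI)
  then have lower: "\<forall>t\<ge>T. l \<le> h t"
    unfolding l_def by (auto intro!: cInf_lower)
  have "(h \<longlongrightarrow> l) at_top"
  proof (rule decreasing_tendsto)
    show "\<forall>\<^sub>F t in at_top. l \<le> h t"
      using lower by (auto simp: eventually_at_top_linorder)
    fix c assume "l < c"
    then obtain s where "s \<ge> T" "h s < c"
      using cInf_lessD[of "h ` {T..}" c] by (auto simp: l_def)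
    then show "\<forall>\<^sub>F t in at_top. h t < c"
      using assms(1) unfolding eventually_at_top_linorder by (metis le_less_trans)
  qed
  with lower show ?thesis
    by blast
qed

lemma LIMSEQ_subseq_subseq_imp_LIMSEQ:
  fixes X :: "nat \<Rightarrow> 'a::metric_space"
  assumes "\<And>r :: nat \<Rightarrow> nat. strict_mono r \<Longrightarrow>
      \<exists>r' :: nat \<Rightarrow> nat. strict_mono r' \<and> (\<lambda>n. X (r (r' n))) \<longlonglongrightarrow> l"
  shows "X \<longlonglongrightarrow> l"
proof (rule tendstoI)
  fix e :: real assume "e > 0"
  define S where "S = {n. \<not> dist (X n) l < e}"
  show "\<forall>\<^sub>F n in sequentially. dist (X n) l < e"
  proof (cases "finite S")
    case True
    then obtain N where "\<forall>n\<in>S. n < N"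
      by (meson finite_nat_bounded lessThan_iff subset_eq)
    then show ?thesis
      unfolding S_def eventually_sequentially by (intro exI[of _ N] allI impI) (metis (mono_tags) leD mem_Collect_eq)
  next
    case False
    then obtain r :: "nat \<Rightarrow> nat" where "strict_mono r" "\<forall>n. r n \<in> S"
      using infinite_enumerate by blast
    obtain r' where "(\<lambda>n. X (r (r' n))) \<longlonglongrightarrow> l"
      using assms[OF \<open>strict_mono r\<close>] by blast
    then have "\<forall>\<^sub>F n in sequentially. dist (X (r (r' n))) l < e"
      using \<open>e > 0\<close> by (rule tendstoD)
    then obtain n where "dist (X (r (r' n))) l < e"
      unfolding eventually_sequentially by auto
    with \<open>\<forall>n. r n \<in> S\<close> show ?thesis
      unfolding S_def by simp
  qed
qed

section \<open>Weak sequential compactness in Hilbert space\<close>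

definition weakly_LIMSEQ :: "(nat \<Rightarrow> 'a::real_inner) \<Rightarrow> 'a \<Rightarrow> bool" where
  "weakly_LIMSEQ u w \<longleftrightarrow> (\<forall>y. (\<lambda>n. u n \<bullet> y) \<longlonglongrightarrow> w \<bullet> y)"

lemma subspace_closure:
  fixes S :: "'a::real_normed_vector set"
  assumes "subspace S"
  shows "subspace (closure S)"
  unfolding subspace_def
proof (intro conjI ballI allI)
  show "0 \<in> closure S"
    using closure_subset subspace_0[OF assms] by blast
next
  fix x y assume "x \<in> closure S" "y \<in> closure S"
  then obtain a b where a: "\<And>n. a n \<in> S" "a \<longlonglongrightarrow> x" and b: "\<And>n. b n \<in> S" "b \<longlonglongrightarrow> y"
    unfolding closure_sequential by blast
  have "\<And>n. a n + b n \<in> S"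
    using assms a(1) b(1) by (simp add: subspace_add)
  moreover have "(\<lambda>n. a n + b n) \<longlonglongrightarrow> x + y"
    using a(2) b(2) by (rule tendsto_add)
  ultimately show "x + y \<in> closure S"
    unfolding closure_sequential by (intro exI[of _ "\<lambda>n. a n + b n"]) simp
next
  fix c :: real and x assume "x \<in> closure S"
  then obtain a where a: "\<And>n. a n \<in> S" "a \<longlonglongrightarrow> x"
    unfolding closure_sequential by blast
  have "\<And>n. c *\<^sub>R a n \<in> S"
    using assms a(1) by (simp add: subspace_scale)
  moreover have "(\<lambda>n. c *\<^sub>R a n) \<longlonglongrightarrow> c *\<^sub>R x"
    using a(2) by (intro tendsto_scaleR tendsto_const)
  ultimately show "c *\<^sub>R x \<in> closure S"
    unfolding closure_sequential by (intro exI[of _ "\<lambda>n. c *\<^sub>R a n"]) simp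
qed

lemma Cauchy_if_dist_sq_le:
  fixes v :: "nat \<Rightarrow> 'a::metric_space"
  assumes "\<And>m n. (dist (v m) (v n))^2 \<le> e m + e n" and "e \<longlonglongrightarrow> 0"
  shows "Cauchy v"
proof (rule metric_CauchyI)
  fix \<epsilon> :: real assume "\<epsilon> > 0"
  then have "\<epsilon>^2 / 2 > 0"
    by simp
  from order_tendstoD(2)[OF assms(2) this] obtain M where M: "\<forall>n\<ge>M. e n < \<epsilon>^2 / 2"
    unfolding eventually_sequentially by blast
  have "dist (v m) (v n) < \<epsilon>" if "m \<ge> M" "n \<ge> M" for m n
  proof -
    have "(dist (v m) (v n))^2 < \<epsilon>^2"
      using assms(1)[of m n] M[rule_format, OF that(1)] M[rule_format, OF that(2)] by linarith
    with \<open>\<epsilon> > 0\<close> show ?thesis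
      by (simp add: power_less_imp_less_base)
  qed
  then show "\<exists>M. \<forall>m\<ge>M. \<forall>n\<ge>M. dist (v m) (v n) < \<epsilon>"
    by blast
qed

lemma quadratic_functional_midpoint:
  fixes L :: "'a::real_inner \<Rightarrow> real"
  assumes "linear L"
  defines "\<Phi> \<equiv> \<lambda>v. (v \<bullet> v) / 2 - L v"
  shows "\<Phi> a + \<Phi> b - 2 * \<Phi> ((1/2) *\<^sub>R (a + b)) = (norm (a - b))^2 / 4"
proof -
  have "L ((1/2) *\<^sub>R (a + b)) = (L a + L b) / 2"
    using linear_add[OF assms(1)] linear_scale[OF assms(1)] by simp
  then show ?thesis
    unfolding \<Phi>_def power2_norm_eq_inner
    by (simp add: inner_add_left inner_add_right inner_diff_left inner_diff_right inner_commute field_simps)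
qed

text \<open>By the midpoint identity every minimising sequence is Cauchy.\<close>

lemma quadratic_functional_has_min_on_subspace:
  fixes C :: "'a::{real_inner,complete_space} set" and L :: "'a \<Rightarrow> real"
  assumes "subspace C" "closed C" "bounded_linear L"
  shows "\<exists>w\<in>C. \<forall>v\<in>C. (w \<bullet> w) / 2 - L w \<le> (v \<bullet> v) / 2 - L v"
proof -
  define \<Phi> where "\<Phi> v = (v \<bullet> v) / 2 - L v" for v
  obtain K where K: "\<And>v. L v \<le> norm v * K"
    using bounded_linear.bounded[OF assms(3)] by (metis abs_le_D1 real_norm_def)
  have "- (K^2) / 2 \<le> \<Phi> v" for v
  proof -
    have "0 \<le> (norm v - K)^2"
      by simp
    with K[of v] show ?thesis
      unfolding \<Phi>_def power2_norm_eq_inner[symmetric] by (simp add: power2_eq_square algebra_simps)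
  qed
  then have bdd: "bdd_below (\<Phi> ` C)"
    by (auto intro!: bdd_belowI)
  define d where "d = Inf (\<Phi> ` C)"
  have d_le: "d \<le> \<Phi> a" if "a \<in> C" for a
    unfolding d_def using bdd that by (auto intro!: cInf_lower)
  have "\<exists>v\<in>C. \<Phi> v < d + inverse (real (Suc n))" for n
    using cInf_lessD[of "\<Phi> ` C" "d + inverse (real (Suc n))"] subspace_0[OF assms(1)]
    unfolding d_def by auto
  then obtain v where vC: "\<And>n. v n \<in> C" and v: "\<And>n. \<Phi> (v n) < d + inverse (real (Suc n))"
    by metis
  have "(dist (v m) (v n))^2 \<le> 4 * inverse (real (Suc m)) + 4 * inverse (real (Suc n))" for m n
  proof -
    have "(1/2) *\<^sub>R (v m + v n) \<in> C"
      using assms(1) vC by (simp add: subspace_add subspace_scale)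
    then have "d \<le> \<Phi> ((1/2) *\<^sub>R (v m + v n))"
      by (rule d_le)
    moreover have "\<Phi> (v m) + \<Phi> (v n) - 2 * \<Phi> ((1/2) *\<^sub>R (v m + v n)) = (norm (v m - v n))^2 / 4"
      unfolding \<Phi>_def using quadratic_functional_midpoint[OF bounded_linear.linear[OF assms(3)]] by simp
    ultimately show ?thesis
      using v[of m] v[of n] unfolding dist_norm by linarith
  qed
  moreover have "(\<lambda>n. 4 * inverse (real (Suc n))) \<longlonglongrightarrow> 0"
    using tendsto_mult_right_zero[OF LIMSEQ_inverse_real_of_nat] .
  ultimately have "Cauchy v"
    by (rule Cauchy_if_dist_sq_le)
  then obtain w where w: "v \<longlonglongrightarrow> w"
    using Cauchy_convergent_iff convergent_def by blast
  have "(\<lambda>n. \<Phi> (v n)) \<longlonglongrightarrow> \<Phi> w"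
    unfolding \<Phi>_def by (intro tendsto_intros w bounded_linear.tendsto[OF assms(3)]) simp
  moreover have "(\<lambda>n. d + inverse (real (Suc n))) \<longlonglongrightarrow> d"
    using tendsto_add[OF tendsto_const LIMSEQ_inverse_real_of_nat] by simp
  ultimately have "\<Phi> w \<le> d"
    using v by (intro tendsto_le[OF sequentially_bot]) (auto intro!: always_eventually less_imp_le)
  moreover have "w \<in> C"
    using closed_sequentially[OF assms(2) vC w] .
  ultimately show ?thesis
  proof (intro bexI[of _ w] ballI)
    fix v assume "v \<in> C"
    from \<open>\<Phi> w \<le> d\<close> d_le[OF this] show "(w \<bullet> w) / 2 - L w \<le> (v \<bullet> v) / 2 - L v"
      unfolding \<Phi>_def by (rule order_trans)
  qed
qed

lemma riesz_representation_subspace: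
  fixes C :: "'a::{real_inner,complete_space} set" and L :: "'a \<Rightarrow> real"
  assumes "subspace C" "closed C" "bounded_linear L"
  shows "\<exists>w\<in>C. \<forall>v\<in>C. w \<bullet> v = L v"
proof -
  define \<Phi> where "\<Phi> v = (v \<bullet> v) / 2 - L v" for v
  obtain w where "w \<in> C" and w_min: "\<And>v. v \<in> C \<Longrightarrow> \<Phi> w \<le> \<Phi> v"
    using quadratic_functional_has_min_on_subspace[OF assms] unfolding \<Phi>_def by blast
  have lin: "linear L"
    using assms(3) bounded_linear.linear by blast
  have "w \<bullet> u = L u" if "u \<in> C" for u
  proof -
    define a where "a = w \<bullet> u - L u"
    define N where "N = u \<bullet> u + 1"
    have N: "N > 0" "u \<bullet> u \<le> N"
      unfolding N_def by (auto intro: add_nonneg_pos)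
    text \<open>Perturbing \<open>w\<close> along \<open>u\<close> by the step \<open>-a/N\<close> lowers \<open>\<Phi>\<close> by at least
      \<open>a\<^sup>2/(2N)\<close>.\<close>
    define s where "s = - a / N"
    have "w + s *\<^sub>R u \<in> C"
      using assms(1) \<open>w \<in> C\<close> that by (simp add: subspace_add subspace_scale)
    moreover have "\<Phi> (w + s *\<^sub>R u) = \<Phi> w + s * a + s^2 * (u \<bullet> u) / 2"
      unfolding \<Phi>_def a_def using linear_add[OF lin] linear_scale[OF lin]
      by (simp add: inner_add_left inner_add_right inner_commute power2_eq_square field_simps)
    ultimately have "0 \<le> s * a + s^2 * (u \<bullet> u) / 2"
      using w_min by fastforce
    also have "\<dots> \<le> s * a + s^2 * N / 2"
      using N by (simp add: mult_left_mono)
    also have "\<dots> = -(a^2 / (2 * N))"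
      unfolding s_def using N by (simp add: power2_eq_square field_simps)
    finally have "a^2 \<le> 0"
      using N by (simp add: divide_le_0_iff)
    then show ?thesis
      unfolding a_def by simp
  qed
  with \<open>w \<in> C\<close> show ?thesis
    by blast
qed

lemma convergent_inner_span:
  assumes "\<And>v. v \<in> S \<Longrightarrow> convergent (\<lambda>n. u n \<bullet> v)" and "v \<in> span S"
  shows "convergent (\<lambda>n. u n \<bullet> v)"
  using assms(2)
proof (induction rule: span_induct_alt)
  case base
  then show ?case
    by (simp add: convergent_const)
next
  case (step c x y)
  then obtain l1 l2 where "(\<lambda>n. u n \<bullet> x) \<longlonglongrightarrow> l1" "(\<lambda>n. u n \<bullet> y) \<longlonglongrightarrow> l2"
    using assms(1) convergent_def by blast
  then have "(\<lambda>n. c * (u n \<bullet> x) + u n \<bullet> y) \<longlonglongrightarrow> c * l1 + l2"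
    by (intro tendsto_intros)
  then show ?case
    by (auto simp: convergent_def inner_add_right)
qed

lemma convergent_inner_closure:
  fixes u :: "nat \<Rightarrow> 'a::real_inner"
  assumes bound: "\<And>n. norm (u n) \<le> B"
    and conv: "\<And>v. v \<in> D \<Longrightarrow> convergent (\<lambda>n. u n \<bullet> v)" and "v \<in> closure D"
  shows "convergent (\<lambda>n. u n \<bullet> v)"
proof -
  have "B \<ge> 0"
    using bound[of 0] norm_ge_zero order_trans by blast
  have "Cauchy (\<lambda>n. u n \<bullet> v)"
  proof (rule metric_CauchyI)
    fix e :: real assume "e > 0"
    define d where "d = e / (3 * (B + 1))"
    have "d > 0" "B * d < e / 3"
      unfolding d_def using \<open>e > 0\<close> \<open>B \<ge> 0\<close> by (simp_all add: field_simps)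
    then obtain v' where "v' \<in> D" "norm (v - v') < d"
      using \<open>v \<in> closure D\<close> unfolding closure_approachable dist_norm
      by (metis norm_minus_commute)
    then have "Cauchy (\<lambda>n. u n \<bullet> v')"
      using conv Cauchy_convergent_iff by blast
    from metric_CauchyD[OF this, of "e / 3"] \<open>e > 0\<close>
    obtain N where N: "\<forall>m\<ge>N. \<forall>n\<ge>N. \<bar>u m \<bullet> v' - u n \<bullet> v'\<bar> < e / 3"
      unfolding dist_real_def by auto
    have near: "\<bar>u n \<bullet> (v - v')\<bar> \<le> B * d" for n
    proof -
      have "\<bar>u n \<bullet> (v - v')\<bar> \<le> norm (u n) * norm (v - v')"
        by (rule Cauchy_Schwarz_ineq2)
      also have "\<dots> \<le> B * d"
        using bound[of n] \<open>norm (v - v') < d\<close> \<open>B \<ge> 0\<close> by (intro mult_mono) auto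
      finally show ?thesis .
    qed
    have "dist (u m \<bullet> v) (u n \<bullet> v) < e" if "m \<ge> N" "n \<ge> N" for m n
    proof -
      have "u m \<bullet> v - u n \<bullet> v = u m \<bullet> (v - v') + (u m \<bullet> v' - u n \<bullet> v') - u n \<bullet> (v - v')"
        by (simp add: inner_diff_right)
      with near[of m] near[of n] N[rule_format, OF that] \<open>B * d < e / 3\<close> show ?thesis
        unfolding dist_real_def abs_less_iff by (simp only: abs_le_iff abs_less_iff) linarith
    qed
    then show "\<exists>N. \<forall>m\<ge>N. \<forall>n\<ge>N. dist (u m \<bullet> v) (u n \<bullet> v) < e"
      by blast
  qed
  then show ?thesis
    using Cauchy_convergent_iff by blast
qed

text \<open>Testing against \<open>y\<close> is the same as testing against its projection onto \<open>M\<close>, which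
  the Riesz representation on \<open>M\<close> provides.\<close>

lemma convergent_inner_from_subspace:
  fixes u :: "nat \<Rightarrow> 'a::{real_inner,complete_space}"
  assumes "subspace M" "closed M" "\<And>n. u n \<in> M" "\<And>v. v \<in> M \<Longrightarrow> convergent (\<lambda>n. u n \<bullet> v)"
  shows "convergent (\<lambda>n. u n \<bullet> y)"
proof -
  obtain p where "p \<in> M" and p: "\<And>v. v \<in> M \<Longrightarrow> p \<bullet> v = y \<bullet> v"
    using riesz_representation_subspace[OF assms(1,2) bounded_linear_inner_right[of y]] by blast
  have "(\<lambda>n. u n \<bullet> y) = (\<lambda>n. u n \<bullet> p)"
    using p[OF assms(3)] by (simp add: inner_commute)
  with assms(4)[OF \<open>p \<in> M\<close>] show ?thesis
    by simp
qed

lemma weakly_LIMSEQ_if_convergent_inner: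
  fixes u :: "nat \<Rightarrow> 'a::{real_inner,complete_space}"
  assumes bound: "\<And>n. norm (u n) \<le> B" and conv: "\<And>y. convergent (\<lambda>n. u n \<bullet> y)"
  shows "\<exists>w. weakly_LIMSEQ u w"
proof -
  define L where "L y = lim (\<lambda>n. u n \<bullet> y)" for y
  have L: "(\<lambda>n. u n \<bullet> y) \<longlonglongrightarrow> L y" for y
    unfolding L_def using conv convergent_LIMSEQ_iff by blast
  have "bounded_linear L"
  proof (rule bounded_linear_intro[where K = B])
    fix x y
    have "(\<lambda>n. u n \<bullet> (x + y)) \<longlonglongrightarrow> L x + L y"
      unfolding inner_add_right by (intro tendsto_intros L)
    then show "L (x + y) = L x + L y"
      using L LIMSEQ_unique by blast
  next
    fix c x
    have "(\<lambda>n. u n \<bullet> (c *\<^sub>R x)) \<longlonglongrightarrow> c *\<^sub>R L x"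
      unfolding inner_scaleR_right by (simp, intro tendsto_intros L)
    then show "L (c *\<^sub>R x) = c *\<^sub>R L x"
      using L LIMSEQ_unique by blast
  next
    fix x
    have "\<bar>u n \<bullet> x\<bar> \<le> B * norm x" for n
      using Cauchy_Schwarz_ineq2[of "u n" x] bound[of n] by (meson mult_right_mono norm_ge_zero order_trans)
    moreover have "(\<lambda>n. \<bar>u n \<bullet> x\<bar>) \<longlonglongrightarrow> \<bar>L x\<bar>"
      by (intro tendsto_intros L)
    ultimately have "\<bar>L x\<bar> \<le> B * norm x"
      by (intro tendsto_le[OF sequentially_bot tendsto_const]) (auto intro: always_eventually)
    then show "norm (L x) \<le> norm x * B"
      by (simp add: mult.commute)
  qed
  then obtain w where "\<And>y. w \<bullet> y = L y"
    using riesz_representation_subspace[OF subspace_UNIV closed_UNIV] by blast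
  with L show ?thesis
    unfolding weakly_LIMSEQ_def by metis
qed

lemma bounded_seq_inner_diagonal_subseq:
  fixes u :: "nat \<Rightarrow> 'a::real_inner"
  assumes bound: "\<And>n. norm (u n) \<le> B"
  shows "\<exists>r. strict_mono r \<and> (\<forall>j. convergent (\<lambda>n. u (r n) \<bullet> u j))"
proof -
  interpret D: subseqs "\<lambda>j s. convergent (\<lambda>n. u (s n) \<bullet> u j)"
  proof
    fix j and s :: "nat \<Rightarrow> nat"
    have "\<bar>u (s n) \<bullet> u j\<bar> \<le> B * norm (u j)" for n
      using Cauchy_Schwarz_ineq2[of "u (s n)" "u j"] bound[of "s n"]
      by (meson mult_right_mono norm_ge_zero order_trans)
    then have "bounded (range (\<lambda>n. u (s n) \<bullet> u j))"
      by (intro boundedI[where B = "B * norm (u j)"]) auto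
    from bounded_imp_convergent_subsequence[OF this] obtain l r where
      "strict_mono r" "((\<lambda>n. u (s n) \<bullet> u j) \<circ> r) \<longlonglongrightarrow> l"
      by blast
    then show "\<exists>r. strict_mono r \<and> convergent (\<lambda>n. u ((s \<circ> r) n) \<bullet> u j)"
      by (auto simp: convergent_def o_def)
  qed
  have "convergent (\<lambda>n. u (D.diagseq n) \<bullet> u j)" for j
  proof -
    have "convergent (\<lambda>n. u ((D.diagseq \<circ> (+) (Suc j)) n) \<bullet> u j)"
    proof (rule D.diagseq_holds)
      fix r s k assume "strict_mono (r :: nat \<Rightarrow> nat)" "convergent (\<lambda>n. u (s n) \<bullet> u k)"
      then show "convergent (\<lambda>n. u ((s \<circ> r) n) \<bullet> u k)"
        using LIMSEQ_subseq_LIMSEQ by (fastforce simp: convergent_def o_def)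
    qed
    then obtain l where "(\<lambda>n. u (D.diagseq (n + Suc j)) \<bullet> u j) \<longlonglongrightarrow> l"
      by (auto simp: convergent_def o_def add.commute)
    then have "(\<lambda>n. u (D.diagseq n) \<bullet> u j) \<longlonglongrightarrow> l"
      by (rule LIMSEQ_offset)
    then show ?thesis
      unfolding convergent_def by blast
  qed
  then show ?thesis
    using D.subseq_diagseq by blast
qed

theorem bounded_seq_has_weakly_convergent_subseq:
  fixes u :: "nat \<Rightarrow> 'a::{real_inner,complete_space}"
  assumes bound: "\<And>n. norm (u n) \<le> B"
  shows "\<exists>r w. strict_mono r \<and> weakly_LIMSEQ (\<lambda>n. u (r n)) w"
proof -
  obtain r where "strict_mono r" and conv: "\<And>j. convergent (\<lambda>n. u (r n) \<bullet> u j)"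
    using bounded_seq_inner_diagonal_subseq[of u B] bound by blast
  define M where "M = closure (span (range u))"
  have "subspace M" "closed M"
    unfolding M_def by (simp_all add: subspace_closure)
  have "range u \<subseteq> M"
    unfolding M_def by (rule subset_trans[OF span_superset closure_subset])
  then have "u (r n) \<in> M" for n
    by blast
  have "convergent (\<lambda>n. u (r n) \<bullet> v)" if "v \<in> span (range u)" for v
    using convergent_inner_span[of "range u" "\<lambda>n. u (r n)" v] conv that by blast
  then have "convergent (\<lambda>n. u (r n) \<bullet> v)" if "v \<in> M" for v
    using convergent_inner_closure[of "\<lambda>n. u (r n)" B "span (range u)" v] bound that
    unfolding M_def by blast
  with \<open>\<And>n. u (r n) \<in> M\<close> have "convergent (\<lambda>n. u (r n) \<bullet> y)" for y
    by (rule convergent_inner_from_subspace[OF \<open>subspace M\<close> \<open>closed M\<close>])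
  with bound \<open>strict_mono r\<close> show ?thesis
    using weakly_LIMSEQ_if_convergent_inner[of "\<lambda>n. u (r n)" B] by blast
qed

section \<open>Opial's lemma\<close>

lemma convex_weakly_lower_semicontinuous:
  fixes f :: "'a::real_inner \<Rightarrow> real"
  assumes "convex_on UNIV f" "(f has_derivative (\<lambda>h. g \<bullet> h)) (at w)"
    and "weakly_LIMSEQ u w" and "\<And>d. d > 0 \<Longrightarrow> \<forall>\<^sub>F n in sequentially. f (u n) \<le> m + d"
  shows "f w \<le> m"
proof (rule field_le_epsilon)
  fix d :: real assume "d > 0"
  have "(\<lambda>n. g \<bullet> u n) \<longlonglongrightarrow> g \<bullet> w"
    using assms(3) unfolding weakly_LIMSEQ_def by (simp add: inner_commute)
  then have "(\<lambda>n. f w + g \<bullet> (u n - w)) \<longlonglongrightarrow> f w + (g \<bullet> w - g \<bullet> w)"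
    unfolding inner_diff_right by (intro tendsto_add[OF tendsto_const] tendsto_diff[OF _ tendsto_const])
  moreover have "\<forall>\<^sub>F n in sequentially. f w + g \<bullet> (u n - w) \<le> m + d"
    using assms(4)[OF \<open>d > 0\<close>]
  proof eventually_elim
    case (elim n)
    with convex_gradient_inequality[OF assms(1,2), of "u n"] show ?case
      by linarith
  qed
  ultimately show "f w \<le> m + d"
    using tendsto_le[OF sequentially_bot tendsto_const] by fastforce
qed

text \<open>Opial's argument: \<open>\<parallel>z t - w\<^sub>1\<parallel>\<^sup>2 - \<parallel>z t - w\<^sub>2\<parallel>\<^sup>2\<close> is affine in \<open>z t\<close>, so its limit can
  be read off along either subsequence.\<close>

lemma weak_cluster_point_unique:
  fixes z :: "real \<Rightarrow> 'a::real_inner"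
  assumes "((\<lambda>t. norm (z t - w1)) \<longlongrightarrow> L1) at_top" "((\<lambda>t. norm (z t - w2)) \<longlongrightarrow> L2) at_top"
    and "filterlim s1 at_top sequentially" "weakly_LIMSEQ (\<lambda>n. z (s1 n)) w1"
    and "filterlim s2 at_top sequentially" "weakly_LIMSEQ (\<lambda>n. z (s2 n)) w2"
  shows "w1 = w2"
proof -
  define D where "D t = (norm (z t - w1))^2 - (norm (z t - w2))^2" for t
  have D_eq: "D t = w1 \<bullet> w1 - w2 \<bullet> w2 - 2 * (z t \<bullet> (w1 - w2))" for t
    unfolding D_def power2_norm_eq_inner
    by (simp add: inner_diff_left inner_diff_right inner_commute algebra_simps)
  have "(D \<longlongrightarrow> L1^2 - L2^2) at_top"
    unfolding D_def by (intro tendsto_intros assms(1,2))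
  then have along: "(\<lambda>n. D (s n)) \<longlonglongrightarrow> L1^2 - L2^2" if "filterlim s at_top sequentially" for s
    using filterlim_compose that by blast
  have weak: "(\<lambda>n. D (s n)) \<longlonglongrightarrow> w1 \<bullet> w1 - w2 \<bullet> w2 - 2 * (w \<bullet> (w1 - w2))"
    if "weakly_LIMSEQ (\<lambda>n. z (s n)) w" for s w
    using that unfolding D_eq weakly_LIMSEQ_def
    by (intro tendsto_diff[OF tendsto_const] tendsto_mult[OF tendsto_const]) blast
  have "w1 \<bullet> w1 - w2 \<bullet> w2 - 2 * (w1 \<bullet> (w1 - w2)) = w1 \<bullet> w1 - w2 \<bullet> w2 - 2 * (w2 \<bullet> (w1 - w2))"
    using LIMSEQ_unique[OF weak[OF assms(4)] along[OF assms(3)]]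
      LIMSEQ_unique[OF weak[OF assms(6)] along[OF assms(5)]] by simp
  then have "(w1 - w2) \<bullet> (w1 - w2) = 0"
    by (simp add: inner_diff_left)
  then show ?thesis
    by simp
qed

lemma bounded_unique_weak_cluster_imp_weakly_tendsto:
  fixes z :: "real \<Rightarrow> 'a::{real_inner,complete_space}"
  assumes bound: "\<And>t. norm (z t) \<le> B"
    and unique: "\<And>s w. filterlim s at_top sequentially \<Longrightarrow> weakly_LIMSEQ (\<lambda>n. z (s n)) w \<Longrightarrow> w = p"
  shows "weakly_tendsto_at_top z p"
  unfolding weakly_tendsto_at_top_def
proof (intro allI tendsto_at_topI_sequentially)
  fix y and X :: "nat \<Rightarrow> real" assume X: "filterlim X at_top sequentially"
  show "(\<lambda>n. z (X n) \<bullet> y) \<longlonglongrightarrow> p \<bullet> y"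
  proof (rule LIMSEQ_subseq_subseq_imp_LIMSEQ)
    fix q :: "nat \<Rightarrow> nat" assume "strict_mono q"
    obtain q' w where "strict_mono q'" and w: "weakly_LIMSEQ (\<lambda>n. z (X (q (q' n)))) w"
      using bounded_seq_has_weakly_convergent_subseq[of "\<lambda>n. z (X (q n))" B] bound by blast
    have "filterlim (\<lambda>n. X (q (q' n))) at_top sequentially"
      using filterlim_compose[OF X filterlim_subseq[OF strict_mono_o[OF \<open>strict_mono q\<close> \<open>strict_mono q'\<close>]]]
      by (simp add: o_def)
    from unique[OF this w] w \<open>strict_mono q'\<close>
    show "\<exists>q'. strict_mono q' \<and> (\<lambda>n. z (X (q (q' n))) \<bullet> y) \<longlonglongrightarrow> p \<bullet> y"
      unfolding weakly_LIMSEQ_def by blast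
  qed
qed

lemma opial_weak_convergence:
  fixes z :: "real \<Rightarrow> 'a::{real_inner,complete_space}"
  assumes bound: "\<And>t. t \<ge> T \<Longrightarrow> norm (z t) \<le> B"
    and dist_conv: "\<And>p. p \<in> S \<Longrightarrow> \<exists>L. ((\<lambda>t. norm (z t - p)) \<longlongrightarrow> L) at_top"
    and cluster: "\<And>s w. filterlim s at_top sequentially \<Longrightarrow> weakly_LIMSEQ (\<lambda>n. z (s n)) w \<Longrightarrow> w \<in> S"
  shows "\<exists>p\<in>S. weakly_tendsto_at_top z p"
proof -
  define zz where "zz t = z (max T t)" for t
  have zz_eq: "\<forall>\<^sub>F t in at_top. zz t = z t"
    using eventually_ge_at_top[of T] by eventually_elim (simp add: zz_def)
  have zz_bound: "norm (zz t) \<le> B" for t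
    unfolding zz_def by (rule bound) simp
  have zz_cluster: "w \<in> S" if "filterlim s at_top sequentially" "weakly_LIMSEQ (\<lambda>n. zz (s n)) w" for s w
  proof (rule cluster)
    show "filterlim (\<lambda>n. max T (s n)) at_top sequentially"
      by (rule filterlim_at_top_mono[OF that(1)]) simp
  qed (use that(2) in \<open>simp add: zz_def\<close>)
  have zz_dist: "\<exists>L. ((\<lambda>t. norm (zz t - p)) \<longlongrightarrow> L) at_top" if p: "p \<in> S" for p
  proof -
    obtain L where "((\<lambda>t. norm (z t - p)) \<longlongrightarrow> L) at_top"
      using dist_conv[OF p] by blast
    moreover have "\<forall>\<^sub>F t in at_top. norm (z t - p) = norm (zz t - p)"
      using zz_eq by eventually_elim simp
    ultimately have "((\<lambda>t. norm (zz t - p)) \<longlongrightarrow> L) at_top"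
      by (rule Lim_transform_eventually)
    then show ?thesis ..
  qed
  obtain r p where "strict_mono r" and p: "weakly_LIMSEQ (\<lambda>n. zz (real (r n))) p"
    using bounded_seq_has_weakly_convergent_subseq[of "\<lambda>n. zz (real n)" B] zz_bound by blast
  have r: "filterlim (\<lambda>n. real (r n)) at_top sequentially"
    using filterlim_compose[OF filterlim_real_sequentially filterlim_subseq[OF \<open>strict_mono r\<close>]] .
  have "p \<in> S"
    using zz_cluster[OF r p] .
  have "w = p" if s: "filterlim s at_top sequentially" and w: "weakly_LIMSEQ (\<lambda>n. zz (s n)) w" for s w
  proof -
    obtain L1 L2 where "((\<lambda>t. norm (zz t - w)) \<longlongrightarrow> L1) at_top" "((\<lambda>t. norm (zz t - p)) \<longlongrightarrow> L2) at_top"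
      using zz_dist zz_cluster[OF s w] \<open>p \<in> S\<close> by blast
    from weak_cluster_point_unique[OF this s w r p] show ?thesis .
  qed
  with zz_bound have "weakly_tendsto_at_top zz p"
    by (rule bounded_unique_weak_cluster_imp_weakly_tendsto)
  have "((\<lambda>t. z t \<bullet> y) \<longlongrightarrow> p \<bullet> y) at_top" for y
  proof (rule Lim_transform_eventually)
    show "((\<lambda>t. zz t \<bullet> y) \<longlongrightarrow> p \<bullet> y) at_top"
      using \<open>weakly_tendsto_at_top zz p\<close> unfolding weakly_tendsto_at_top_def by blast
    show "\<forall>\<^sub>F t in at_top. zz t \<bullet> y = z t \<bullet> y"
      using zz_eq by eventually_elim simp
  qed
  with \<open>p \<in> S\<close> show ?thesis
    unfolding weakly_tendsto_at_top_def by blast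
qed

section \<open>The time-rescaled gradient flow\<close>

lemma rescaled_ode_imp_gradient_flow:
  fixes x x' x'' z :: "real \<Rightarrow> 'a::real_normed_vector" and g :: "'a \<Rightarrow> 'a"
  assumes z_def: "z = (\<lambda>s. x s + ((1 / \<gamma>) * (\<tau> s / \<tau>' s)) *\<^sub>R x' s)" and "\<gamma> > 0"
    and \<tau>_pos: "\<And>t. t \<ge> t0 \<Longrightarrow> \<tau> t > 0" and \<tau>'_pos: "\<And>t. t \<ge> t0 \<Longrightarrow> \<tau>' t > 0"
    and \<tau>_d1: "\<And>t. t \<ge> t0 \<Longrightarrow> (\<tau> has_real_derivative \<tau>' t) (at t within {t0..})"
    and \<tau>_d2: "\<And>t. t \<ge> t0 \<Longrightarrow> (\<tau>' has_real_derivative \<tau>'' t) (at t within {t0..})"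
    and x_d1: "\<And>t. t \<ge> t0 \<Longrightarrow> (x has_vector_derivative x' t) (at t within {t0..})"
    and x_d2: "\<And>t. t \<ge> t0 \<Longrightarrow> (x' has_vector_derivative x'' t) (at t within {t0..})"
    and ode: "\<And>t. t \<ge> t0 \<Longrightarrow>
       x'' t + (((1 + \<gamma>) * (\<tau>' t)\<^sup>2 - \<tau> t * \<tau>'' t) / (\<tau> t * \<tau>' t)) *\<^sub>R x' t
       + (\<gamma> * (\<tau>' t)\<^sup>2 / \<tau> t) *\<^sub>R g (x t + ((1 / \<gamma>) * (\<tau> t / \<tau>' t)) *\<^sub>R x' t) = 0"
    and "t \<ge> t0"
  shows "(z has_vector_derivative (- \<tau>' t) *\<^sub>R g (z t)) (at t within {t0..})"
proof -
  define c where "c = (1 / \<gamma>) * (\<tau> t / \<tau>' t)"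
  define c' where "c' = (1 / \<gamma>) * ((\<tau>' t * \<tau>' t - \<tau> t * \<tau>'' t) / (\<tau>' t * \<tau>' t))"
  define k1 where "k1 = ((1 + \<gamma>) * (\<tau>' t)\<^sup>2 - \<tau> t * \<tau>'' t) / (\<tau> t * \<tau>' t)"
  define k2 where "k2 = \<gamma> * (\<tau>' t)\<^sup>2 / \<tau> t"
  have "((\<lambda>s. (1 / \<gamma>) * (\<tau> s / \<tau>' s)) has_real_derivative c') (at t within {t0..})"
    unfolding c'_def using \<tau>'_pos[OF \<open>t \<ge> t0\<close>]
    by (intro DERIV_cmult DERIV_divide \<tau>_d1[OF \<open>t \<ge> t0\<close>] \<tau>_d2[OF \<open>t \<ge> t0\<close>]) simp
  then have deriv: "(z has_vector_derivative x' t + (c *\<^sub>R x'' t + c' *\<^sub>R x' t)) (at t within {t0..})"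
    unfolding z_def c_def
    by (intro has_vector_derivative_add x_d1[OF \<open>t \<ge> t0\<close>] has_vector_derivative_scaleR x_d2[OF \<open>t \<ge> t0\<close>])
  have x'': "x'' t = - (k1 *\<^sub>R x' t) - k2 *\<^sub>R g (z t)"
    using ode[OF \<open>t \<ge> t0\<close>] unfolding k1_def k2_def z_def by (simp add: eq_neg_iff_add_eq_0 algebra_simps)
  have coeffs: "1 + c' - c * k1 = 0" "c * k2 = \<tau>' t"
    unfolding c_def c'_def k1_def k2_def using \<tau>_pos[OF \<open>t \<ge> t0\<close>] \<tau>'_pos[OF \<open>t \<ge> t0\<close>] \<open>\<gamma> > 0\<close>
    by (simp_all add: field_simps power2_eq_square)
  have "x' t + (c *\<^sub>R x'' t + c' *\<^sub>R x' t) = (1 + c' - c * k1) *\<^sub>R x' t - (c * k2) *\<^sub>R g (z t)"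
    unfolding x'' by (simp add: algebra_simps)
  also have "\<dots> = (- \<tau>' t) *\<^sub>R g (z t)"
    unfolding coeffs by simp
  finally show ?thesis
    using deriv by simp
qed

context
  fixes f :: "'a::{real_inner,complete_space} \<Rightarrow> real" and g :: "'a \<Rightarrow> 'a"
    and \<tau> \<tau>' :: "real \<Rightarrow> real" and z :: "real \<Rightarrow> 'a" and t0 :: real
  assumes convex: "convex_on UNIV f"
    and gradient: "\<And>y. (f has_derivative (\<lambda>h. g y \<bullet> h)) (at y)"
    and \<tau>_deriv: "\<And>t. t \<ge> t0 \<Longrightarrow> (\<tau> has_real_derivative \<tau>' t) (at t within {t0..})"
    and \<tau>'_pos: "\<And>t. t \<ge> t0 \<Longrightarrow> \<tau>' t > 0"
    and flow: "\<And>t. t \<ge> t0 \<Longrightarrow> (z has_vector_derivative (- \<tau>' t) *\<^sub>R g (z t)) (at t within {t0..})"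
begin

lemma flow_value_antimono:
  assumes "t0 \<le> s" "s \<le> t"
  shows "f (z t) \<le> f (z s)"
proof (rule DERIV_within_nonpos_imp_nonincreasing[OF assms])
  fix u assume "s \<le> u" "u \<le> t"
  with assms have "u \<ge> t0"
    by simp
  then show "((\<lambda>s. f (z s)) has_real_derivative g (z u) \<bullet> ((- \<tau>' u) *\<^sub>R g (z u))) (at u within {t0..})"
    by (intro has_real_derivative_gradient_chain gradient flow)
  from \<tau>'_pos[OF \<open>u \<ge> t0\<close>] show "g (z u) \<bullet> ((- \<tau>' u) *\<^sub>R g (z u)) \<le> 0"
    by simp
qed

lemma flow_dist_deriv:
  assumes "t \<ge> t0"
  shows "((\<lambda>s. (norm (z s - p))^2) has_real_derivative - 2 * \<tau>' t * (g (z t) \<bullet> (z t - p)))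
    (at t within {t0..})"
proof -
  have "((\<lambda>s. z s - p) has_vector_derivative (- \<tau>' t) *\<^sub>R g (z t)) (at t within {t0..})"
    using has_vector_derivative_diff[OF flow[OF assms] has_vector_derivative_const] by simp
  from has_real_derivative_inner[OF this this] show ?thesis
    unfolding power2_norm_eq_inner by (simp add: inner_commute mult.assoc)
qed

lemma flow_dist_deriv_le:
  assumes "t \<ge> t0"
  shows "- 2 * \<tau>' t * (g (z t) \<bullet> (z t - p)) \<le> - 2 * \<tau>' t * (f (z t) - f p)"
proof -
  have "f (z t) - f p \<le> g (z t) \<bullet> (z t - p)"
    using convex_gradient_inequality[OF convex gradient, of "z t" p] by (simp add: inner_diff_right)
  with \<tau>'_pos[OF assms] show ?thesis
    by simp
qed

lemma flow_dist_antimono: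
  assumes "p \<in> argmin_set f" "t0 \<le> s" "s \<le> t"
  shows "norm (z t - p) \<le> norm (z s - p)"
proof -
  have "(norm (z t - p))^2 \<le> (norm (z s - p))^2"
  proof (rule DERIV_within_nonpos_imp_nonincreasing[OF assms(2,3) flow_dist_deriv])
    fix u assume "s \<le> u" "u \<le> t"
    with assms(2) have "u \<ge> t0"
      by simp
    then show "u \<ge> t0" .
    have "0 \<le> 2 * \<tau>' u * (f (z u) - f p)"
      using \<tau>'_pos[OF \<open>u \<ge> t0\<close>] assms(1) by (simp add: argmin_set_def)
    with flow_dist_deriv_le[OF \<open>u \<ge> t0\<close>, of p] show "- 2 * \<tau>' u * (g (z u) \<bullet> (z u - p)) \<le> 0"
      by linarith
  qed
  then show ?thesis
    by (rule power2_le_imp_le[OF _ norm_ge_zero])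
qed

text \<open>The energy \<open>\<parallel>z u - p\<parallel>\<^sup>2 + 2 (\<tau> u) (f (z t) - min f)\<close> is nonincreasing on \<open>[s, t]\<close>,
  because \<open>f \<circ> z\<close> is.\<close>

lemma flow_energy_estimate:
  assumes "t0 \<le> s" "s \<le> t"
  shows "2 * (\<tau> t - \<tau> s) * (f (z t) - f p) \<le> (norm (z s - p))^2 - (norm (z t - p))^2"
proof -
  define c where "c = 2 * (f (z t) - f p)"
  have "(norm (z t - p))^2 + c * \<tau> t \<le> (norm (z s - p))^2 + c * \<tau> s"
  proof (rule DERIV_within_nonpos_imp_nonincreasing[OF assms])
    fix u assume "s \<le> u" "u \<le> t"
    with assms(1) have "u \<ge> t0"
      by simp
    then show "((\<lambda>u. (norm (z u - p))^2 + c * \<tau> u) has_real_derivative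
        - 2 * \<tau>' u * (g (z u) \<bullet> (z u - p)) + c * \<tau>' u) (at u within {t0..})"
      by (intro DERIV_add flow_dist_deriv DERIV_cmult \<tau>_deriv)
    have "c \<le> 2 * (f (z u) - f p)"
      using flow_value_antimono[OF \<open>u \<ge> t0\<close> \<open>u \<le> t\<close>] unfolding c_def by simp
    then have "c * \<tau>' u \<le> 2 * (f (z u) - f p) * \<tau>' u"
      using \<tau>'_pos[OF \<open>u \<ge> t0\<close>] by (simp add: mult_right_mono)
    also have "\<dots> = 2 * \<tau>' u * (f (z u) - f p)"
      by simp
    finally have "c * \<tau>' u \<le> 2 * \<tau>' u * (f (z u) - f p)" .
    with flow_dist_deriv_le[OF \<open>u \<ge> t0\<close>, of p]
    show "- 2 * \<tau>' u * (g (z u) \<bullet> (z u - p)) + c * \<tau>' u \<le> 0"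
      by linarith
  qed
  moreover have "2 * (\<tau> t - \<tau> s) * (f (z t) - f p) = c * \<tau> t - c * \<tau> s"
    unfolding c_def by (simp add: algebra_simps)
  ultimately show ?thesis
    by linarith
qed

lemma flow_value_tendsto_min:
  assumes "p \<in> argmin_set f" and \<tau>_lim: "filterlim \<tau> at_top at_top"
  shows "((\<lambda>t. f (z t)) \<longlongrightarrow> f p) at_top"
proof (rule decreasing_tendsto)
  show "\<forall>\<^sub>F t in at_top. f p \<le> f (z t)"
    using assms(1) by (simp add: argmin_set_def)
  fix x assume "f p < x"
  define \<delta> where "\<delta> = x - f p"
  define D where "D = (norm (z t0 - p))^2"
  have "\<delta> > 0" "D \<ge> 0"
    using \<open>f p < x\<close> by (simp_all add: \<delta>_def D_def)
  have "\<forall>\<^sub>F t in at_top. \<tau> t0 + D / \<delta> + 1 \<le> \<tau> t"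
    using \<tau>_lim unfolding filterlim_at_top by blast
  then show "\<forall>\<^sub>F t in at_top. f (z t) < x"
    using eventually_ge_at_top[of t0]
  proof eventually_elim
    case (elim t)
    have "f p \<le> f (z t)"
      using assms(1) by (simp add: argmin_set_def)
    have "0 \<le> D / \<delta>"
      using \<open>\<delta> > 0\<close> \<open>D \<ge> 0\<close> by simp
    then have "\<tau> t - \<tau> t0 \<ge> 0"
      using elim(1) by linarith
    with \<open>f p \<le> f (z t)\<close> have "0 \<le> (\<tau> t - \<tau> t0) * (f (z t) - f p)"
      by simp
    moreover have "2 * ((\<tau> t - \<tau> t0) * (f (z t) - f p)) \<le> D"
      using flow_energy_estimate[OF order_refl elim(2), of p] zero_le_power2[of "norm (z t - p)"]
      unfolding D_def mult.assoc[symmetric] by linarith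
    ultimately have "(\<tau> t - \<tau> t0) * (f (z t) - f p) \<le> D"
      by linarith
    show ?case
    proof (rule ccontr)
      assume "\<not> f (z t) < x"
      then have "(D / \<delta> + 1) * \<delta> \<le> (\<tau> t - \<tau> t0) * (f (z t) - f p)"
        using elim(1) \<open>\<delta> > 0\<close> \<open>0 \<le> D / \<delta>\<close> unfolding \<delta>_def by (intro mult_mono) auto
      moreover have "(D / \<delta> + 1) * \<delta> = D + \<delta>"
        using \<open>\<delta> > 0\<close> by (simp add: field_simps)
      ultimately show False
        using \<open>(\<tau> t - \<tau> t0) * (f (z t) - f p) \<le> D\<close> \<open>\<delta> > 0\<close> by linarith
    qed
  qed
qed

text \<open>The rate \<open>o(1/\<tau>)\<close>: the energy estimate on \<open>[s, t]\<close> with \<open>s\<close> so large that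
  \<open>\<parallel>z - p\<parallel>\<^sup>2\<close> has almost reached its limit, plus \<open>f (z t) \<rightarrow> min f\<close> to absorb the
  term \<open>\<tau> s\<close>.\<close>

lemma flow_value_rate:
  assumes "p \<in> argmin_set f" and \<tau>_lim: "filterlim \<tau> at_top at_top" and "\<epsilon> > 0"
  shows "\<forall>\<^sub>F t in at_top. f (z t) - f p \<le> \<epsilon> / \<tau> t"
proof -
  define G where "G t = (norm (z t - p))^2" for t
  have "G t \<le> G s" if "t0 \<le> s" "s \<le> t" for s t
    unfolding G_def using flow_dist_antimono[OF assms(1) that] by (simp add: power_mono)
  then obtain L where "(G \<longlongrightarrow> L) at_top" and L_le: "\<forall>t\<ge>t0. L \<le> G t"
    using antimono_bounded_below_tendsto[of t0 G 0] unfolding G_def by fastforce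
  then have "\<forall>\<^sub>F t in at_top. G t < L + \<epsilon> \<and> \<tau> t > 0 \<and> t \<ge> t0"
    using order_tendstoD(2)[of G L at_top "L + \<epsilon>"] \<open>\<epsilon> > 0\<close> \<tau>_lim
    by (auto intro!: eventually_conj simp: filterlim_at_top_dense eventually_ge_at_top)
  then obtain s where "G s < L + \<epsilon>" "\<tau> s > 0" "s \<ge> t0"
    unfolding eventually_at_top_linorder by (meson order_refl)
  have "((\<lambda>t. f (z t) - f p) \<longlongrightarrow> 0) at_top"
    using flow_value_tendsto_min[OF assms(1,2)] by (simp add: LIM_zero)
  moreover have "0 < \<epsilon> / (2 * \<tau> s)"
    using \<open>\<epsilon> > 0\<close> \<open>\<tau> s > 0\<close> by simp
  ultimately have "\<forall>\<^sub>F t in at_top. f (z t) - f p < \<epsilon> / (2 * \<tau> s)"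
    by (rule order_tendstoD(2))
  moreover have "\<forall>\<^sub>F t in at_top. \<tau> t > 0"
    using \<tau>_lim by (simp add: filterlim_at_top_dense)
  ultimately show ?thesis
    using eventually_ge_at_top[of s]
  proof eventually_elim
    case (elim t)
    with \<open>s \<ge> t0\<close> have "t \<ge> t0"
      by simp
    have "2 * (\<tau> t - \<tau> s) * (f (z t) - f p) \<le> \<epsilon>"
      using flow_energy_estimate[OF \<open>s \<ge> t0\<close> elim(3), of p] L_le \<open>t \<ge> t0\<close> \<open>G s < L + \<epsilon>\<close>
      unfolding G_def by fastforce
    moreover have "2 * \<tau> s * (f (z t) - f p) \<le> \<epsilon>"
      using elim(1) \<open>\<tau> s > 0\<close> by (simp add: field_simps)
    ultimately have "\<tau> t * (f (z t) - f p) \<le> \<epsilon>"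
      by (simp add: algebra_simps)
    with elim(2) show ?case
      by (simp add: field_simps)
  qed
qed

lemma flow_weak_convergence:
  assumes "argmin_set f \<noteq> {}" and \<tau>_lim: "filterlim \<tau> at_top at_top"
  shows "\<exists>p\<in>argmin_set f. weakly_tendsto_at_top z p"
proof -
  obtain p0 where p0: "p0 \<in> argmin_set f"
    using assms(1) by blast
  show ?thesis
  proof (rule opial_weak_convergence)
  show "norm (z t) \<le> norm p0 + norm (z t0 - p0)" if "t \<ge> t0" for t
    using norm_triangle_sub[of "z t" p0] flow_dist_antimono[OF p0 order_refl that] by linarith
  show "\<exists>L. ((\<lambda>t. norm (z t - p)) \<longlongrightarrow> L) at_top" if "p \<in> argmin_set f" for p
    using antimono_bounded_below_tendsto[of t0 "\<lambda>t. norm (z t - p)" 0] flow_dist_antimono[OF that]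
    by fastforce
  show "w \<in> argmin_set f"
    if s: "filterlim s at_top sequentially" and w: "weakly_LIMSEQ (\<lambda>n. z (s n)) w" for s w
  proof -
    have lim: "((\<lambda>n. f (z (s n))) \<longlongrightarrow> f p0) sequentially"
      using filterlim_compose[OF flow_value_tendsto_min[OF p0 \<tau>_lim] s] .
    have "\<forall>\<^sub>F n in sequentially. f (z (s n)) \<le> f p0 + d" if "d > 0" for d
      using order_tendstoD(2)[OF lim, of "f p0 + d"] that by (auto elim!: eventually_mono)
    from convex_weakly_lower_semicontinuous[OF convex gradient w this] have "f w \<le> f p0" .
    with p0 show ?thesis
      unfolding argmin_set_def by (auto intro: order_trans)
  qed
  qed
qed

end

section \<open>Averaging with weight \<open>\<tau>\<^sup>\<gamma>\<close>\<close>

lemma smallo_inverse_if_eventually_le: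
  fixes U \<tau> :: "real \<Rightarrow> real"
  assumes "\<And>\<epsilon>. \<epsilon> > 0 \<Longrightarrow> \<forall>\<^sub>F t in at_top. U t \<le> \<epsilon> / \<tau> t"
    and "\<forall>\<^sub>F t in at_top. 0 \<le> U t \<and> 0 < \<tau> t"
  shows "U \<in> o[at_top](\<lambda>t. 1 / \<tau> t)"
proof (rule landau_o.smallI)
  fix \<epsilon> :: real assume "\<epsilon> > 0"
  from assms(1)[OF this] assms(2) show "\<forall>\<^sub>F t in at_top. norm (U t) \<le> \<epsilon> * norm (1 / \<tau> t)"
    by eventually_elim simp
qed

context
  fixes \<tau> \<tau>' :: "real \<Rightarrow> real" and t0 \<gamma> :: real
  assumes \<tau>_pos: "\<And>t. t \<ge> t0 \<Longrightarrow> \<tau> t > 0"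
    and \<tau>'_pos: "\<And>t. t \<ge> t0 \<Longrightarrow> \<tau>' t > 0"
    and \<tau>_deriv: "\<And>t. t \<ge> t0 \<Longrightarrow> (\<tau> has_real_derivative \<tau>' t) (at t within {t0..})"
begin

text \<open>Integrating factor \<open>\<tau>\<^sup>\<gamma>\<close>: the function \<open>\<tau>\<^sup>\<gamma> U - K \<tau>\<^bsup>\<gamma>-a\<^esup>\<close> with
  \<open>K = \<gamma> \<epsilon> / (\<gamma> - a)\<close> is nonincreasing on \<open>[T, \<infinity>)\<close>.\<close>

lemma averaging_bound:
  fixes U U' \<psi> :: "real \<Rightarrow> real"
  assumes "t0 \<le> T" "0 \<le> a" "a < \<gamma>" "0 \<le> \<epsilon>"
    and U_deriv: "\<And>t. t \<ge> t0 \<Longrightarrow> (U has_real_derivative U' t) (at t within {t0..})"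
    and U'_le: "\<And>t. t \<ge> T \<Longrightarrow> U' t \<le> (\<gamma> * \<tau>' t / \<tau> t) * (\<psi> t - U t)"
    and \<psi>_le: "\<And>t. t \<ge> T \<Longrightarrow> \<psi> t \<le> \<epsilon> * \<tau> t powr (-a)"
    and "T \<le> t"
  shows "\<tau> t powr \<gamma> * U t \<le> \<tau> T powr \<gamma> * U T + (\<gamma> * \<epsilon> / (\<gamma> - a)) * \<tau> t powr (\<gamma> - a)"
proof -
  define K where "K = \<gamma> * \<epsilon> / (\<gamma> - a)"
  have "K \<ge> 0"
    unfolding K_def using assms(2-4) by simp
  define H where "H u = \<tau> u powr \<gamma> * U u - K * \<tau> u powr (\<gamma> - a)" for u
  define H' where "H' u = \<gamma> * \<tau> u powr (\<gamma> - 1) * \<tau>' u * U u + U' u * \<tau> u powr \<gamma>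
     - K * ((\<gamma> - a) * \<tau> u powr (\<gamma> - a - 1) * \<tau>' u)" for u
  have "H t \<le> H T"
  proof (rule DERIV_within_nonpos_imp_nonincreasing[OF assms(1) \<open>T \<le> t\<close>])
    fix u assume "T \<le> u"
    with assms(1) have "u \<ge> t0"
      by simp
    have powr_deriv: "((\<lambda>u. \<tau> u powr r) has_real_derivative r * \<tau> u powr (r - 1) * \<tau>' u) (at u within {t0..})" for r
      using DERIV_chain2[OF has_real_derivative_powr[OF \<tau>_pos[OF \<open>u \<ge> t0\<close>]] \<tau>_deriv[OF \<open>u \<ge> t0\<close>]]
      by simp
    show "(H has_real_derivative H' u) (at u within {t0..})"
      unfolding H_def H'_def by (intro DERIV_diff DERIV_mult powr_deriv U_deriv[OF \<open>u \<ge> t0\<close>] DERIV_cmult)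
    define P where "P = \<tau> u powr (\<gamma> - 1)"
    have "\<tau> u > 0" "P > 0"
      using \<tau>_pos[OF \<open>u \<ge> t0\<close>] by (simp_all add: P_def)
    have P_mult: "\<tau> u powr \<gamma> = P * \<tau> u" "\<tau> u powr (\<gamma> - a - 1) = P * \<tau> u powr (-a)"
      unfolding P_def using powr_add[of "\<tau> u" "\<gamma> - 1" 1] powr_add[of "\<tau> u" "\<gamma> - 1" "-a"] \<open>\<tau> u > 0\<close>
      by (simp_all add: algebra_simps)
    have "P * \<tau> u * U' u \<le> P * \<tau> u * ((\<gamma> * \<tau>' u / \<tau> u) * (\<psi> u - U u))"
      using U'_le[OF \<open>T \<le> u\<close>] \<open>\<tau> u > 0\<close> \<open>P > 0\<close> by (intro mult_left_mono) auto
    also have "\<dots> = \<gamma> * P * \<tau>' u * (\<psi> u - U u)"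
      using \<open>\<tau> u > 0\<close> by (simp add: field_simps)
    also have "\<dots> \<le> \<gamma> * P * \<tau>' u * (\<epsilon> * \<tau> u powr (-a) - U u)"
      using \<psi>_le[OF \<open>T \<le> u\<close>] \<open>P > 0\<close> \<tau>'_pos[OF \<open>u \<ge> t0\<close>] assms(2,3) by (intro mult_left_mono) auto
    finally have U'_bound: "P * \<tau> u * U' u \<le> \<gamma> * P * \<tau>' u * (\<epsilon> * \<tau> u powr (-a) - U u)" .
    have K_eq: "K * ((\<gamma> - a) * (P * \<tau> u powr (-a)) * \<tau>' u) = \<gamma> * P * \<tau>' u * (\<epsilon> * \<tau> u powr (-a))"
      unfolding K_def using assms(3) by (simp add: field_simps)
    show "H' u \<le> 0"
      unfolding H'_def P_def[symmetric] P_mult K_eq using U'_bound by (simp add: algebra_simps)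
  qed
  with \<open>K \<ge> 0\<close> show ?thesis
    unfolding H_def K_def[symmetric] by (smt (verit) powr_ge_zero mult_nonneg_nonneg)
qed

lemma averaging_decay:
  fixes U U' \<psi> :: "real \<Rightarrow> real"
  assumes "0 \<le> a" "a < \<gamma>" and \<tau>_lim: "filterlim \<tau> at_top at_top"
    and U_deriv: "\<And>t. t \<ge> t0 \<Longrightarrow> (U has_real_derivative U' t) (at t within {t0..})"
    and U'_le: "\<And>t. t \<ge> t0 \<Longrightarrow> U' t \<le> (\<gamma> * \<tau>' t / \<tau> t) * (\<psi> t - U t)"
    and \<psi>_decay: "\<And>\<epsilon>. \<epsilon> > 0 \<Longrightarrow> \<forall>\<^sub>F t in at_top. \<psi> t \<le> \<epsilon> * \<tau> t powr (-a)"
    and "\<epsilon> > 0"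
  shows "\<forall>\<^sub>F t in at_top. U t \<le> \<epsilon> * \<tau> t powr (-a)"
proof -
  define \<epsilon>' where "\<epsilon>' = \<epsilon> * (\<gamma> - a) / (2 * \<gamma>)"
  have "\<epsilon>' > 0" "\<gamma> * \<epsilon>' / (\<gamma> - a) = \<epsilon> / 2"
    unfolding \<epsilon>'_def using assms(1,2) \<open>\<epsilon> > 0\<close> by (simp_all add: field_simps)
  from \<psi>_decay[OF \<open>\<epsilon>' > 0\<close>]
  obtain T where "T \<ge> t0" and \<psi>_le: "\<And>t. t \<ge> T \<Longrightarrow> \<psi> t \<le> \<epsilon>' * \<tau> t powr (-a)"
    unfolding eventually_at_top_linorder by (metis max.cobounded1 max.cobounded2 order_trans)
  have U'_le_T: "U' t \<le> (\<gamma> * \<tau>' t / \<tau> t) * (\<psi> t - U t)" if "t \<ge> T" for t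
    using U'_le \<open>T \<ge> t0\<close> that by simp
  define C where "C = \<tau> T powr \<gamma> * U T"
  have bound: "\<tau> t powr \<gamma> * U t \<le> C + (\<epsilon> / 2) * \<tau> t powr (\<gamma> - a)" if "t \<ge> T" for t
    using averaging_bound[OF \<open>T \<ge> t0\<close> assms(1,2) _ U_deriv U'_le_T \<psi>_le that] \<open>\<epsilon>' > 0\<close>
    unfolding C_def \<open>\<gamma> * \<epsilon>' / (\<gamma> - a) = \<epsilon> / 2\<close> by simp
  have "((\<lambda>t. \<tau> t powr (a - \<gamma>)) \<longlongrightarrow> 0) at_top"
    using tendsto_neg_powr[OF _ \<tau>_lim] assms(2) by simp
  then have "((\<lambda>t. \<bar>C\<bar> * \<tau> t powr (a - \<gamma>)) \<longlongrightarrow> 0) at_top"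
    by (rule tendsto_mult_right_zero)
  moreover have "(0::real) < \<epsilon> / 2"
    using \<open>\<epsilon> > 0\<close> by simp
  ultimately have "\<forall>\<^sub>F t in at_top. \<bar>C\<bar> * \<tau> t powr (a - \<gamma>) < \<epsilon> / 2"
    by (rule order_tendstoD(2))
  then show ?thesis
    using eventually_ge_at_top[of T]
  proof eventually_elim
    case (elim t)
    with \<open>T \<ge> t0\<close> have "\<tau> t > 0"
      by (intro \<tau>_pos) simp
    have "C \<le> \<bar>C\<bar> * (\<tau> t powr (a - \<gamma>) * \<tau> t powr (\<gamma> - a))"
      using \<open>\<tau> t > 0\<close> by (simp flip: powr_add)
    also have "\<dots> = \<bar>C\<bar> * \<tau> t powr (a - \<gamma>) * \<tau> t powr (\<gamma> - a)"
      by (simp only: mult.assoc)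
    also have "\<dots> \<le> (\<epsilon> / 2) * \<tau> t powr (\<gamma> - a)"
      using elim(1) by (intro mult_right_mono) simp_all
    finally have "\<tau> t powr \<gamma> * U t \<le> \<epsilon> * \<tau> t powr (\<gamma> - a)"
      using bound[OF elim(2)] by simp
    then have "U t \<le> \<epsilon> * \<tau> t powr (\<gamma> - a) / \<tau> t powr \<gamma>"
      using \<open>\<tau> t > 0\<close> by (simp add: field_simps)
    then show ?case
      using \<open>\<tau> t > 0\<close> by (simp add: powr_diff powr_minus_divide)
  qed
qed

lemma averaged_value_rate:
  fixes f :: "'a::real_inner \<Rightarrow> real" and x x' z :: "real \<Rightarrow> 'a"
  assumes convex: "convex_on UNIV f" and gradient: "\<And>y. (f has_derivative (\<lambda>h. g y \<bullet> h)) (at y)"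
    and x_deriv: "\<And>t. t \<ge> t0 \<Longrightarrow> (x has_vector_derivative x' t) (at t within {t0..})"
    and x'_eq: "\<And>t. t \<ge> t0 \<Longrightarrow> x' t = (\<gamma> * \<tau>' t / \<tau> t) *\<^sub>R (z t - x t)"
    and "\<gamma> > 1" and \<tau>_lim: "filterlim \<tau> at_top at_top"
    and z_rate: "\<And>\<epsilon>. \<epsilon> > 0 \<Longrightarrow> \<forall>\<^sub>F t in at_top. f (z t) - m \<le> \<epsilon> / \<tau> t"
    and "\<epsilon> > 0"
  shows "\<forall>\<^sub>F t in at_top. f (x t) - m \<le> \<epsilon> / \<tau> t"
proof -
  have \<tau>_eventually_pos: "\<forall>\<^sub>F t in at_top. \<tau> t > 0"
    using \<tau>_lim by (simp add: filterlim_at_top_dense)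
  have "\<forall>\<^sub>F t in at_top. f (x t) - m \<le> \<epsilon> * \<tau> t powr (-1)"
  proof (rule averaging_decay[where U' = "\<lambda>t. g (x t) \<bullet> x' t" and \<psi> = "\<lambda>t. f (z t) - m"])
    show "0 \<le> (1::real)" "1 < \<gamma>" "\<epsilon> > 0"
      using assms by simp_all
    show "filterlim \<tau> at_top at_top"
      by (fact \<tau>_lim)
    show "((\<lambda>t. f (x t) - m) has_real_derivative g (x t) \<bullet> x' t) (at t within {t0..})" if "t \<ge> t0" for t
      using DERIV_diff[OF has_real_derivative_gradient_chain[OF gradient x_deriv[OF that]] DERIV_const[of m]]
      by simp
    show "g (x t) \<bullet> x' t \<le> (\<gamma> * \<tau>' t / \<tau> t) * (f (z t) - m - (f (x t) - m))" if "t \<ge> t0" for t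
    proof -
      have "\<gamma> * \<tau>' t / \<tau> t > 0"
        using \<tau>_pos[OF that] \<tau>'_pos[OF that] \<open>\<gamma> > 1\<close> by simp
      moreover have "g (x t) \<bullet> (z t - x t) \<le> f (z t) - f (x t)"
        using convex_gradient_inequality[OF convex gradient, of "x t" "z t"] by simp
      ultimately have "(\<gamma> * \<tau>' t / \<tau> t) * (g (x t) \<bullet> (z t - x t)) \<le> (\<gamma> * \<tau>' t / \<tau> t) * (f (z t) - f (x t))"
        by (intro mult_left_mono) auto
      then show ?thesis
        unfolding x'_eq[OF that] inner_scaleR_right by simp
    qed
    show "\<forall>\<^sub>F t in at_top. f (z t) - m \<le> \<delta> * \<tau> t powr (-1)" if "\<delta> > 0" for \<delta>
      using z_rate[OF that] \<tau>_eventually_pos by eventually_elim (simp add: powr_minus_divide)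
  qed
  with \<tau>_eventually_pos show ?thesis
    by eventually_elim (simp add: powr_minus_divide)
qed

lemma averaging_tendsto:
  fixes U U' \<psi> :: "real \<Rightarrow> real"
  assumes "\<gamma> > 0" and \<tau>_lim: "filterlim \<tau> at_top at_top"
    and U_deriv: "\<And>t. t \<ge> t0 \<Longrightarrow> (U has_real_derivative U' t) (at t within {t0..})"
    and U'_eq: "\<And>t. t \<ge> t0 \<Longrightarrow> U' t = (\<gamma> * \<tau>' t / \<tau> t) * (\<psi> t - U t)"
    and \<psi>_lim: "(\<psi> \<longlongrightarrow> l) at_top"
  shows "(U \<longlongrightarrow> l) at_top"
proof -
  have \<tau>_eventually_pos: "\<forall>\<^sub>F t in at_top. \<tau> t > 0"
    using \<tau>_lim by (simp add: filterlim_at_top_dense)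
  text \<open>The decay estimate with \<open>a = 0\<close>, applied to \<open>\<sigma> (U - l)\<close> for both signs \<open>\<sigma>\<close>.\<close>
  have one_sided: "\<forall>\<^sub>F t in at_top. \<sigma> * (U t - l) \<le> \<epsilon>" if "\<epsilon> > 0" for \<sigma> \<epsilon>
  proof -
    have \<psi>_conv: "((\<lambda>t. \<sigma> * (\<psi> t - l)) \<longlongrightarrow> 0) at_top"
      using \<psi>_lim by (intro tendsto_mult_right_zero) (simp add: LIM_zero)
    have "\<forall>\<^sub>F t in at_top. \<sigma> * (U t - l) \<le> \<epsilon> * \<tau> t powr (-0)"
    proof (rule averaging_decay[where U' = "\<lambda>t. \<sigma> * U' t" and \<psi> = "\<lambda>t. \<sigma> * (\<psi> t - l)"])
      show "0 \<le> (0::real)" "0 < \<gamma>" "\<epsilon> > 0" "filterlim \<tau> at_top at_top"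
        using assms that by simp_all
      show "((\<lambda>t. \<sigma> * (U t - l)) has_real_derivative \<sigma> * U' t) (at t within {t0..})" if "t \<ge> t0" for t
        using DERIV_cmult[OF DERIV_diff[OF U_deriv[OF that] DERIV_const[of l]], of \<sigma>] by simp
      show "\<sigma> * U' t \<le> (\<gamma> * \<tau>' t / \<tau> t) * (\<sigma> * (\<psi> t - l) - \<sigma> * (U t - l))" if "t \<ge> t0" for t
      proof -
        have "\<sigma> * (\<psi> t - l) - \<sigma> * (U t - l) = \<sigma> * (\<psi> t - U t)"
          by (simp add: algebra_simps)
        then show ?thesis
          unfolding U'_eq[OF that] by (simp add: mult.left_commute)
      qed
      show "\<forall>\<^sub>F t in at_top. \<sigma> * (\<psi> t - l) \<le> \<delta> * \<tau> t powr (-0)" if "\<delta> > 0" for \<delta>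
        using order_tendstoD(2)[OF \<psi>_conv that] \<tau>_eventually_pos by eventually_elim simp
    qed
    with \<tau>_eventually_pos show ?thesis
      by eventually_elim simp
  qed
  show ?thesis
  proof (rule tendstoI)
    fix \<epsilon> :: real assume "\<epsilon> > 0"
    then have "\<epsilon> / 2 > 0"
      by simp
    from one_sided[OF this, of 1] one_sided[OF this, of "-1"]
    have "\<forall>\<^sub>F t in at_top. U t - l \<le> \<epsilon> / 2" "\<forall>\<^sub>F t in at_top. l - U t \<le> \<epsilon> / 2"
      by simp_all
    then show "\<forall>\<^sub>F t in at_top. dist (U t) l < \<epsilon>"
      unfolding dist_real_def by eventually_elim (use \<open>\<epsilon> > 0\<close> in \<open>simp add: abs_less_iff\<close>)
  qed
qed

lemma averaged_weak_convergence:
  fixes x x' z :: "real \<Rightarrow> 'a::real_inner"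
  assumes x_deriv: "\<And>t. t \<ge> t0 \<Longrightarrow> (x has_vector_derivative x' t) (at t within {t0..})"
    and x'_eq: "\<And>t. t \<ge> t0 \<Longrightarrow> x' t = (\<gamma> * \<tau>' t / \<tau> t) *\<^sub>R (z t - x t)"
    and "\<gamma> > 0" and \<tau>_lim: "filterlim \<tau> at_top at_top"
    and "weakly_tendsto_at_top z p"
  shows "weakly_tendsto_at_top x p"
  unfolding weakly_tendsto_at_top_def
proof
  fix y
  show "((\<lambda>t. x t \<bullet> y) \<longlongrightarrow> p \<bullet> y) at_top"
  proof (rule averaging_tendsto[OF \<open>\<gamma> > 0\<close> \<tau>_lim])
    show "((\<lambda>t. x t \<bullet> y) has_real_derivative x' t \<bullet> y) (at t within {t0..})" if "t \<ge> t0" for t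
      using has_real_derivative_inner[OF x_deriv[OF that] has_vector_derivative_const[of y]] by simp
    show "x' t \<bullet> y = (\<gamma> * \<tau>' t / \<tau> t) * (z t \<bullet> y - x t \<bullet> y)" if "t \<ge> t0" for t
      unfolding x'_eq[OF that] by (simp add: inner_diff_left)
    show "((\<lambda>t. z t \<bullet> y) \<longlongrightarrow> p \<bullet> y) at_top"
      using assms(5) unfolding weakly_tendsto_at_top_def by blast
  qed
qed

end

theorem mainTheorem7:
  fixes f :: "'a::{real_inner,complete_space} \<Rightarrow> real"
    and g :: "'a \<Rightarrow> 'a"
    and \<tau> \<tau>' \<tau>'' :: "real \<Rightarrow> real"
    and x x' x'' :: "real \<Rightarrow> 'a"
    and t0 \<gamma> :: real
  assumes A: "assumption_A f g"
    and t0: "t0 > 0" and gam: "\<gamma> > 1"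
    and tau_pos: "\<And>t. t \<ge> t0 \<Longrightarrow> \<tau> t > 0"
    and tau_d1: "\<And>t. t \<ge> t0 \<Longrightarrow> (\<tau> has_real_derivative \<tau>' t) (at t within {t0..})"
    and tau_d2: "\<And>t. t \<ge> t0 \<Longrightarrow> (\<tau>' has_real_derivative \<tau>'' t) (at t within {t0..})"
    and tau_cont: "continuous_on {t0..} \<tau>''"
    and tau'_pos: "\<And>t. t \<ge> t0 \<Longrightarrow> \<tau>' t > 0"
    and tau_lim: "filterlim \<tau> at_top at_top"
    and x_d1: "\<And>t. t \<ge> t0 \<Longrightarrow> (x has_vector_derivative x' t) (at t within {t0..})"
    and x_d2: "\<And>t. t \<ge> t0 \<Longrightarrow> (x' has_vector_derivative x'' t) (at t within {t0..})"
    and x_cont: "continuous_on {t0..} x''"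
    and ode: "\<And>t. t \<ge> t0 \<Longrightarrow>
       x'' t + (((1 + \<gamma>) * (\<tau>' t)\<^sup>2 - \<tau> t * \<tau>'' t) / (\<tau> t * \<tau>' t)) *\<^sub>R x' t
       + (\<gamma> * (\<tau>' t)\<^sup>2 / \<tau> t) *\<^sub>R g (x t + ((1 / \<gamma>) * (\<tau> t / \<tau>' t)) *\<^sub>R x' t) = 0"
  shows "(\<lambda>t. f (x t) - (INF y. f y)) \<in> o[at_top](\<lambda>t. 1 / \<tau> t) \<and>
         (\<exists>z\<in>argmin_set f. weakly_tendsto_at_top x z)"
proof -
  have convex: "convex_on UNIV f" and gradient: "\<And>y. (f has_derivative (\<lambda>h. g y \<bullet> h)) (at y)"
    and "argmin_set f \<noteq> {}"
    using A unfolding assumption_A_def argmin_set_def by auto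
  then obtain p where p: "p \<in> argmin_set f"
    by blast
  then have inf_f: "(INF y. f y) = f p"
    unfolding argmin_set_def by (intro antisym cINF_lower cINF_greatest bdd_belowI) auto
  define z where "z = (\<lambda>t. x t + ((1 / \<gamma>) * (\<tau> t / \<tau>' t)) *\<^sub>R x' t)"
  have "\<gamma> > 0"
    using gam by simp
  note flow = rescaled_ode_imp_gradient_flow[OF z_def \<open>\<gamma> > 0\<close> tau_pos tau'_pos tau_d1 tau_d2 x_d1 x_d2 ode]
  have x'_eq: "x' t = (\<gamma> * \<tau>' t / \<tau> t) *\<^sub>R (z t - x t)" if "t \<ge> t0" for t
    using tau_pos[OF that] tau'_pos[OF that] \<open>\<gamma> > 0\<close> unfolding z_def by simp
  have "(\<lambda>t. f (x t) - f p) \<in> o[at_top](\<lambda>t. 1 / \<tau> t)"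
  proof (rule smallo_inverse_if_eventually_le)
    show "\<forall>\<^sub>F t in at_top. f (x t) - f p \<le> \<epsilon> / \<tau> t" if "\<epsilon> > 0" for \<epsilon>
      using averaged_value_rate[OF tau_pos tau'_pos tau_d1 convex gradient x_d1 x'_eq gam tau_lim
          flow_value_rate[OF convex gradient tau_d1 tau'_pos flow p tau_lim] that] .
    show "\<forall>\<^sub>F t in at_top. 0 \<le> f (x t) - f p \<and> 0 < \<tau> t"
      using p tau_lim unfolding argmin_set_def by (simp add: filterlim_at_top_dense)
  qed
  moreover obtain q where "q \<in> argmin_set f" "weakly_tendsto_at_top z q"
    using flow_weak_convergence[OF convex gradient tau_d1 tau'_pos flow \<open>argmin_set f \<noteq> {}\<close> tau_lim]
    by blast
  moreover have "weakly_tendsto_at_top x q"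
    using averaged_weak_convergence[OF tau_pos tau'_pos tau_d1 x_d1 x'_eq \<open>\<gamma> > 0\<close> tau_lim]
      \<open>weakly_tendsto_at_top z q\<close> by simp
  ultimately show ?thesis
    unfolding inf_f by blast
qed

end
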